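(* For all positive integers $n,k$ with $k\le n$, \[ \overline{M}_k(n)=\sum_{d\mid n}\varphi(d)\sum_{\substack{\delta\mid n\\ \gcd(\delta,d)=1}}\mu(\delta)\sum_{\substack{1\le j\le n/\delta\\ \delta j\equiv 1 \ (\mathrm{mod}\ d)}} f_k\!\left(\left\lfloor \frac{n}{j\delta}\right\rfloor\right), \] where $d$ and $\delta$ run over the positive divisors of $n$, and for $d=1$ the congruence condition is vacuous.
   Context: For a nonempty finite set $A$ of positive integers, $(A)$ denotes the greatest common divisor of the elements of $A$. $\varphi$ is Euler's totient function and $\mu$ is the Möbius function. For $m,k\in\mathbb{N}$, $f_k(m)$ is the number of $k$-element subsets $A\subseteq\{1,2,\ldots,m\}$ with $(A)=1$ (so $f_k(m)=0$ if $m<k$; equivalently $f_k(m)=\sum_{d=1}^m\mu(d)\binom{\lfloor m/d\rfloor}{k}$). For $1\le k\le n$ define \[ \overline{M}_k(n)=\sum_{\substack{A\subseteq\{1,\ldots,n\},\ \#A=k\\ \gcd((A),n)=1}}\gcd((A)-1,n), \] the sum over all $k$-element subsets $A$ of $\{1,\ldots,n\}$ with $\gcd((A),n)=1$, with the convention $\gcd(0,n)=n$. *)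

theory Defs
  imports "HOL-Number_Theory.Number_Theory" "HOL-Computational_Algebra.Squarefree"
begin

definition moebius_mu :: "nat \<Rightarrow> int" where
  "moebius_mu d = (if squarefree d then (-1) ^ card (prime_factors d) else 0)"

definition fk :: "nat \<Rightarrow> nat \<Rightarrow> nat" where
  "fk k m = card {A. A \<subseteq> {1..m} \<and> card A = k \<and> Gcd A = 1}"

text \<open>Overline M_k(n): sum of gcd((A)-1, n) over k-subsets A of {1..n} with gcd((A),n)=1.
  Here gcd(0,n) = n automatically, matching the stated convention.\<close>
definition Mbar :: "nat \<Rightarrow> nat \<Rightarrow> nat" where
  "Mbar k n = (\<Sum>A \<in> {A. A \<subseteq> {1..n} \<and> card A = k \<and> coprime (Gcd A) n}. gcd (Gcd A - 1) n)"

end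

theory Submission
  imports Defs
begin

(* Group the subsets A by g = (A). Those with gcd g are the dilates by g of the k-subsets of
   {1..n div g} with gcd 1, so there are f_k(n div g) of them. Then expand
   gcd(g - 1, n) = sum of phi(d) over the divisors d of n with g = 1 mod d, detect the condition
   coprime g n by the Moebius sum over the common divisors delta of g and n, write g = delta * j
   and interchange the summations. *)

lemma moebius_mu_prime_mult:
  assumes p: "prime (p::nat)" and "q > 0"
  shows "moebius_mu (p * q) = (if p dvd q then 0 else - moebius_mu q)"
proof (cases "p dvd q")
  case True
  then have "p ^ 2 dvd p * q" by (simp add: power2_eq_square)
  then have "\<not> squarefree (p * q)" using p by (intro not_squarefreeI[of p]) auto
  with True show ?thesis by (simp add: moebius_mu_def)
next
  case False
  then have "coprime p q" using p by (simp add: prime_imp_coprime)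
  then have "squarefree (p * q) \<longleftrightarrow> squarefree q"
    using squarefree_multD(2)[of p q] squarefree_mult_coprime squarefree_prime[OF p] by blast
  moreover have "prime_factors (p * q) = insert p (prime_factors q)"
    using prime_factors_product[of p q] p \<open>q > 0\<close> prime_prime_factors[OF p] by auto
  moreover have "p \<notin> prime_factors q" using False by auto
  ultimately show ?thesis using False by (simp add: moebius_mu_def)
qed

lemma sum_moebius_divisors_eq_0:
  assumes "m > (1::nat)"
  shows "(\<Sum>\<delta> | \<delta> dvd m. moebius_mu \<delta>) = 0"
proof -
  obtain p where p: "prime p" "p dvd m" using prime_factor_nat[of m] assms by auto
  then obtain q where m: "m = p * q" by blast
  have "q > 0" using m assms by (cases q) auto
  define D0 where "D0 = {\<delta>. \<delta> dvd m \<and> \<not> p dvd \<delta>}"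
  define D1 where "D1 = {\<delta>. \<delta> dvd m \<and> p dvd \<delta>}"
  have "e dvd q" if "e dvd m" "\<not> p dvd e" for e
    using that p m by (metis coprime_commute coprime_dvd_mult_right_iff prime_imp_coprime)
  then have D0_eq: "D0 = {e. e dvd q \<and> \<not> p dvd e}" using m by (auto simp: D0_def)
  have D1_eq: "D1 = (*) p ` {e. e dvd q}"
    using p m by (auto simp: D1_def prime_gt_0_nat)
  have "sum moebius_mu D1 = (\<Sum>e | e dvd q. moebius_mu (p * e))"
    unfolding D1_eq using p by (subst sum.reindex) (auto simp: inj_on_def prime_gt_0_nat)
  also have "\<dots> = (\<Sum>e | e dvd q. if \<not> p dvd e then - moebius_mu e else 0)"
    using p \<open>q > 0\<close> by (intro sum.cong) (auto simp: moebius_mu_prime_mult dvd_pos_nat)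
  also have "\<dots> = - sum moebius_mu D0"
    unfolding D0_eq using \<open>q > 0\<close>
    by (simp add: sum.inter_filter[symmetric] sum_negf)
  finally have "sum moebius_mu D1 = - sum moebius_mu D0" .
  moreover have "{\<delta>. \<delta> dvd m} = D0 \<union> D1" "D0 \<inter> D1 = {}" "finite D0" "finite D1"
    using assms by (auto simp: D0_def D1_def)
  ultimately show ?thesis by (simp add: sum.union_disjoint)
qed

lemma sum_moebius_common_divisors:
  assumes "n > (0::nat)"
  shows "(\<Sum>\<delta> | \<delta> dvd n \<and> \<delta> dvd g. moebius_mu \<delta>) = (if coprime g n then 1 else 0)"
proof -
  have divisors: "{\<delta>. \<delta> dvd n \<and> \<delta> dvd g} = {\<delta>. \<delta> dvd gcd g n}" by auto
  show ?thesis
  proof (cases "coprime g n")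
    case True
    then show ?thesis unfolding divisors by (simp add: moebius_mu_def)
  next
    case False
    then have "gcd g n > 1"
      using assms by (metis coprime_iff_gcd_eq_1 gcd_pos_nat nat_neq_iff less_one)
    then have "(\<Sum>\<delta> | \<delta> dvd gcd g n. moebius_mu \<delta>) = 0" by (rule sum_moebius_divisors_eq_0)
    with False show ?thesis unfolding divisors by simp
  qed
qed

lemma gcd_pred_eq_sum_totient:
  assumes "g \<ge> (1::nat)"
  shows "gcd (g - 1) n = (\<Sum>d | d dvd n \<and> [g = 1] (mod d). totient d)"
proof -
  have "{d. d dvd n \<and> [g = 1] (mod d)} = {d. d dvd gcd (g - 1) n}"
    using assms by (auto simp: cong_altdef_nat)
  then show ?thesis using totient_divisor_sum[of "gcd (g - 1) n"] by simp
qed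

lemma card_subsets_with_Gcd:
  assumes "g > (0::nat)"
  shows "card {A. A \<subseteq> {1..n} \<and> card A = k \<and> Gcd A = g} = fk k (n div g)"
proof -
  define S where "S = {B. B \<subseteq> {1..n div g} \<and> card B = k \<and> Gcd B = 1}"
  have inj_mult: "inj ((*) g)" using assms by (auto simp: inj_def)
  have "(`) ((*) g) ` S = {A. A \<subseteq> {1..n} \<and> card A = k \<and> Gcd A = g}"
  proof (intro equalityI subsetI)
    fix A assume "A \<in> (`) ((*) g) ` S"
    then obtain B where B: "B \<in> S" and A: "A = (*) g ` B" by auto
    have "A \<subseteq> {1..n}"
      using B assms by (auto simp: A S_def less_eq_div_iff_mult_less_eq mult.commute)
    moreover have "card A = k" "Gcd A = g"
      using B inj_mult by (auto simp: A S_def card_image inj_on_subset Gcd_mult)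
    ultimately show "A \<in> {A. A \<subseteq> {1..n} \<and> card A = k \<and> Gcd A = g}" by simp
  next
    fix A assume "A \<in> {A. A \<subseteq> {1..n} \<and> card A = k \<and> Gcd A = g}"
    then have A: "A \<subseteq> {1..n}" "card A = k" "Gcd A = g" by auto
    define B where "B = (\<lambda>a. a div g) ` A"
    have g_dvd: "g dvd a" if "a \<in> A" for a using Gcd_dvd[OF that] A(3) by simp
    then have A_eq: "A = (*) g ` B" by (force simp: B_def image_image)
    have "g div g \<le> a div g \<and> a div g \<le> n div g" if "a \<in> A" for a
      using that A(1) g_dvd by (force intro: div_le_mono dvd_imp_le)
    then have "1 \<le> a div g \<and> a div g \<le> n div g" if "a \<in> A" for a
      using that assms by auto
    then have "B \<subseteq> {1..n div g}" by (auto simp: B_def)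
    moreover have "card B = k" "Gcd B = 1"
      using A A_eq inj_mult assms Gcd_mult[of g B] by (auto simp: card_image inj_on_subset)
    ultimately show "A \<in> (`) ((*) g) ` S" using A_eq by (auto simp: S_def)
  qed
  moreover have "inj_on ((`) ((*) g)) S"
    using inj_mult by (simp add: inj_on_def inj_image_eq_iff)
  ultimately show ?thesis by (metis card_image S_def fk_def)
qed

lemma Mbar_eq_sum_over_Gcd:
  assumes "k \<ge> 1"
  shows "Mbar k n = (\<Sum>g | g \<in> {1..n} \<and> coprime g n. fk k (n div g) * gcd (g - 1) n)"
proof -
  define S where "S = {A. A \<subseteq> {1..n} \<and> card A = k \<and> coprime (Gcd A) n}"
  define G where "G = {g. g \<in> {1..n} \<and> coprime g n}"
  have "finite S" unfolding S_def by (rule finite_subset[of _ "Pow {1..n}"]) auto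
  have "Gcd A \<in> G" if "A \<in> S" for A
  proof -
    from that assms obtain a where a: "a \<in> A" by (force simp: S_def)
    with that have "Gcd A dvd a" "1 \<le> a" "a \<le> n" by (auto simp: S_def)
    then have "Gcd A \<noteq> 0" "Gcd A \<le> a" using a by (auto intro!: dvd_imp_le)
    then have "1 \<le> Gcd A" "Gcd A \<le> n" using \<open>a \<le> n\<close> by linarith+
    with that show ?thesis by (simp add: S_def G_def)
  qed
  then have "Mbar k n = (\<Sum>g\<in>G. \<Sum>A | A \<in> S \<and> Gcd A = g. gcd (Gcd A - 1) n)"
    unfolding Mbar_def S_def[symmetric] using \<open>finite S\<close>
    by (intro sum.group[symmetric]) (auto simp: G_def)
  also have "\<dots> = (\<Sum>g\<in>G. fk k (n div g) * gcd (g - 1) n)"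
  proof (rule sum.cong[OF refl])
    fix g assume "g \<in> G"
    then have "{A. A \<in> S \<and> Gcd A = g} = {A. A \<subseteq> {1..n} \<and> card A = k \<and> Gcd A = g}"
      by (auto simp: S_def G_def)
    with \<open>g \<in> G\<close> card_subsets_with_Gcd[of g n k]
    show "(\<Sum>A | A \<in> S \<and> Gcd A = g. gcd (Gcd A - 1) n) = fk k (n div g) * gcd (g - 1) n"
      by (simp add: G_def)
  qed
  finally show ?thesis unfolding G_def .
qed

lemma sum_multiples_reindex:
  fixes f :: "nat \<Rightarrow> 'a::comm_monoid_add"
  assumes "\<delta> > 0"
  shows "(\<Sum>j | 1 \<le> j \<and> j \<le> n div \<delta> \<and> P (\<delta> * j). f (j * \<delta>))
       = (\<Sum>g | g \<in> {1..n} \<and> \<delta> dvd g \<and> P g. f g)"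
  using assms
  by (intro sum.reindex_bij_witness[of _ "\<lambda>g. g div \<delta>" "\<lambda>j. \<delta> * j"])
     (auto simp: less_eq_div_iff_mult_less_eq mult.commute div_le_mono Suc_le_eq)

lemma sum_moebius_sieve:
  fixes F :: "nat \<Rightarrow> int"
  assumes "n > 0"
  shows "(\<Sum>\<delta> | \<delta> dvd n \<and> coprime \<delta> d. moebius_mu \<delta> *
            (\<Sum>j | 1 \<le> j \<and> j \<le> n div \<delta> \<and> [\<delta> * j = 1] (mod d). F (j * \<delta>)))
       = (\<Sum>g | g \<in> {1..n} \<and> coprime g n \<and> [g = 1] (mod d). F g)"
proof -
  define E where "E = {g. g \<in> {1..n} \<and> [g = 1] (mod d)}"
  have "finite E" "finite {\<delta>. \<delta> dvd n}" using assms by (auto simp: E_def)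
  have "coprime g d" if "g \<in> E" for g
    using that cong_imp_coprime[of 1 g d] by (simp add: E_def cong_sym_eq)
  then have no_multiples: "{g. g \<in> E \<and> \<delta> dvd g} = {}" if "\<not> coprime \<delta> d" for \<delta>
    using that by (metis (mono_tags, lifting) Collect_empty_eq coprime_mult_left_iff dvdE)
  have "(\<Sum>j | 1 \<le> j \<and> j \<le> n div \<delta> \<and> [\<delta> * j = 1] (mod d). F (j * \<delta>))
      = (\<Sum>g | g \<in> E \<and> \<delta> dvd g. F g)" if "\<delta> dvd n" for \<delta>
    using sum_multiples_reindex[of \<delta> F n "\<lambda>g. [g = 1] (mod d)"] that assms
    by (simp add: E_def dvd_pos_nat conj_commute conj_left_commute)
  then have "(\<Sum>\<delta> | \<delta> dvd n \<and> coprime \<delta> d. moebius_mu \<delta> *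
            (\<Sum>j | 1 \<le> j \<and> j \<le> n div \<delta> \<and> [\<delta> * j = 1] (mod d). F (j * \<delta>)))
      = (\<Sum>\<delta> | \<delta> dvd n \<and> coprime \<delta> d. moebius_mu \<delta> * (\<Sum>g | g \<in> E \<and> \<delta> dvd g. F g))"
    by (intro sum.cong) auto
  also have "\<dots> = (\<Sum>\<delta> | \<delta> dvd n. moebius_mu \<delta> * (\<Sum>g | g \<in> E \<and> \<delta> dvd g. F g))"
    using \<open>finite {\<delta>. \<delta> dvd n}\<close>
    by (intro sum.mono_neutral_left) (simp_all add: no_multiples Collect_mono_iff)
  also have "\<dots> = (\<Sum>g\<in>E. (\<Sum>\<delta> | \<delta> dvd n \<and> \<delta> dvd g. moebius_mu \<delta>) * F g)"
    using \<open>finite E\<close> \<open>finite {\<delta>. \<delta> dvd n}\<close>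
    by (simp add: sum_distrib_left sum_distrib_right sum.swap_restrict)
  also have "\<dots> = (\<Sum>g\<in>E. if coprime g n then F g else 0)"
    using assms by (intro sum.cong) (simp_all add: sum_moebius_common_divisors)
  also have "\<dots> = (\<Sum>g | g \<in> {1..n} \<and> coprime g n \<and> [g = 1] (mod d). F g)"
    using \<open>finite E\<close>
    by (simp add: sum.inter_filter[symmetric] E_def conj_commute conj_left_commute)
  finally show ?thesis .
qed

lemma Mbar_eq_sum_totient:
  assumes "k \<ge> 1" and "n > 0"
  shows "int (Mbar k n) = (\<Sum>d | d dvd n. int (totient d) *
           (\<Sum>g | g \<in> {1..n} \<and> coprime g n \<and> [g = 1] (mod d). int (fk k (n div g))))"
proof -
  define F where "F g = int (fk k (n div g))" for g
  define G where "G = {g. g \<in> {1..n} \<and> coprime g n}"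
  have "finite {d. d dvd n}" using assms by simp
  have "int (Mbar k n) = (\<Sum>g\<in>G. int (gcd (g - 1) n) * F g)"
    using assms(1) by (simp add: Mbar_eq_sum_over_Gcd G_def F_def mult.commute)
  also have "\<dots> = (\<Sum>g\<in>G. \<Sum>d | d dvd n \<and> [g = 1] (mod d). int (totient d) * F g)"
  proof (rule sum.cong[OF refl])
    fix g assume "g \<in> G"
    then have "g \<ge> 1" by (simp add: G_def)
    then show "int (gcd (g - 1) n) * F g = (\<Sum>d | d dvd n \<and> [g = 1] (mod d). int (totient d) * F g)"
      unfolding gcd_pred_eq_sum_totient[OF \<open>g \<ge> 1\<close>] by (simp add: sum_distrib_right)
  qed
  also have "\<dots> = (\<Sum>d | d dvd n. \<Sum>g | g \<in> G \<and> [g = 1] (mod d). int (totient d) * F g)"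
    using sum.swap_restrict[of G "{d. d dvd n}"] \<open>finite {d. d dvd n}\<close> by (simp add: G_def)
  also have "\<dots> = (\<Sum>d | d dvd n. int (totient d) * (\<Sum>g | g \<in> G \<and> [g = 1] (mod d). F g))"
    by (simp add: sum_distrib_left)
  finally show ?thesis by (simp add: F_def G_def)
qed

theorem mainTheorem2:
  fixes n k :: nat
  assumes "1 \<le> k" and "k \<le> n"
  shows "int (Mbar k n) =
    (\<Sum>d | d dvd n. int (totient d) *
       (\<Sum>\<delta> | \<delta> dvd n \<and> coprime \<delta> d. moebius_mu \<delta> *
          (\<Sum>j | 1 \<le> j \<and> j \<le> n div \<delta> \<and> [\<delta> * j = 1] (mod d).
               int (fk k (n div (j * \<delta>))))))"
proof -
  have "n > 0" using assms by simp
  show ?thesis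
    unfolding sum_moebius_sieve[OF \<open>n > 0\<close>, where F = "\<lambda>g. int (fk k (n div g))"]
    using assms(1) \<open>n > 0\<close> by (rule Mbar_eq_sum_totient)
qed

end
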